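(* Let $A\in\mathbb{R}^{n\times n}$ be symmetric, let $W_k\in\mathbb{R}^{n\times m}$ satisfy $W_k^TW_k=I_m$, and let $v_{k-1},v_k\in\mathbb{R}^{n\times p}$ and $\alpha_k,\beta_k\in\mathbb{R}^{p\times p}$ be given. Define block vectors $q_{k+j}$, $j\ge1$, by the continuation process \[ \begin{aligned} \tilde q_{k+1}&=Av_k-v_k\alpha_k-v_{k-1}\beta_k^T, & q_{k+1}\beta_{k+1}&=(I_n-P_1)\tilde q_{k+1},\\ \tilde q_{k+2}&=Aq_{k+1}-v_k\beta_{k+1}^T, & q_{k+2}\beta_{k+2}&=(I_n-P_2)\tilde q_{k+2},\\ \tilde q_{k+j}&=Aq_{k+j-1}-q_{k+j-2}\beta_{k+j-1}^T, & q_{k+j}\beta_{k+j}&=(I_n-P_j)\tilde q_{k+j},\quad j\ge3, \end{aligned} \] where $P_1=W_kW_k^T$, $P_2=P_1+q_{k+1}q_{k+1}^T$, $P_j=P_2+q_{k+j-1}q_{k+j-1}^T$ for $j\ge3$, and where, for each $j$, the columns of $q_{k+j}$ form an orthonormal basis of the column space of $(I_n-P_j)\tilde q_{k+j}$ and $\beta_{k+j}$ is the (possibly rectangular) matrix of full row rank with $q_{k+j}\beta_{k+j}=(I_n-P_j)\tilde q_{k+j}$. Then for every $j\ge1$ the set of columns of $W_k,q_{k+1},\ldots,q_{k+j}$ is orthonormal. Moreover, for $j\ge3$, \[ \beta_{k+j}=q_{k+j}^TAq_{k+j-1}. \]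
   Context: In cases of rank deficiency the number of columns of $q_{k+j}$ is reduced accordingly (it equals the rank of $(I_n-P_j)\tilde q_{k+j}$). *)

theory Defs
  imports "Jordan_Normal_Form.DL_Rank"
begin

definition col_space :: "real mat \<Rightarrow> real vec set" where
  "col_space M = {M *\<^sub>v x | x. x \<in> carrier_vec (dim_col M)}"

definition orthonormal_list :: "real vec list \<Rightarrow> bool" where
  "orthonormal_list xs \<longleftrightarrow>
     (\<forall>a < length xs. \<forall>b < length xs. xs ! a \<bullet> xs ! b = (if a = b then 1 else 0))"

definition full_row_rank :: "real mat \<Rightarrow> bool" where
  "full_row_rank B \<longleftrightarrow> vec_space.rank (dim_row B) B = dim_row B"

end

theory Submission
  imports Defs
begin

text \<open>
  Treat \<open>W\<close> as block 0 next to the blocks \<open>q j\<close>, and show by induction on \<open>J\<close> that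
  blocks \<open>0, \<dots>, J\<close> are mutually orthogonal. Since \<open>q j * beta j = (I - P j) * qt j\<close> and
  \<open>beta j\<close> has full row rank, \<open>X\<^sup>T * q j = 0\<close> follows from \<open>X\<^sup>T * (I - P j) * qt j = 0\<close>.
  For the blocks \<open>W\<close>, \<open>q 1\<close>, \<open>q (j - 1)\<close> onto which \<open>P j\<close> projects this is immediate.
  For the other blocks \<open>q a\<close>, \<open>2 \<le> a \<le> j - 2\<close>, one has \<open>(q a)\<^sup>T * P j = 0\<close>, and by the
  symmetry of \<open>A\<close> and the recurrence for \<open>qt j\<close>
    \<open>(q a)\<^sup>T * qt j = ((q (j - 1))\<^sup>T * A * q a)\<^sup>T - (q a)\<^sup>T * q (j - 2) * (beta (j - 1))\<^sup>T\<close>.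
  For \<open>a < j - 2\<close> both terms vanish, because \<open>A * q a\<close> lies in the span of
  \<open>q (a - 1)\<close>, \<open>qt (a + 1)\<close>, and \<open>qt (a + 1)\<close> is \<open>q (a + 1) * beta (a + 1)\<close> up to
  the blocks of \<open>P (a + 1)\<close>. For \<open>a = j - 2\<close> they cancel, because the same computation
  applied to \<open>(q j)\<^sup>T * qt j\<close> gives \<open>beta j = (q j)\<^sup>T * A * q (j - 1)\<close>.
\<close>

lemma full_row_rank_orthogonal_cols_imp_zero:
  fixes B :: "real mat"
  assumes B: "B \<in> carrier_mat r c" and rank: "full_row_rank B"
    and y: "y \<in> carrier_vec r" and orth: "\<And>i. i < c \<Longrightarrow> y \<bullet> col B i = 0"
  shows "y = 0\<^sub>v r"
proof -
  interpret V: vec_space "TYPE(real)" r .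
  have cols_B: "set (cols B) \<subseteq> carrier_vec r" using B cols_dim by blast
  obtain U where U: "maximal U (\<lambda>T. T \<subseteq> set (cols B) \<and> V.lin_indpt T)"
    using maximal_exists_superset[of "set (cols B)" "\<lambda>T. T \<subseteq> set (cols B) \<and> V.lin_indpt T" "{}"]
    by (auto simp: V.lin_dep_def)
  then have U_sub: "U \<subseteq> set (cols B)" and U_indpt: "V.lin_indpt U"
    unfolding maximal_def by auto
  have "card U = r"
    using V.rank_card_indpt[OF B U] rank B unfolding full_row_rank_def by simp
  then have "V.basis U"
    using V.dim_li_is_basis[OF V.fin_dim _ _ U_indpt] U_sub cols_B V.dim_is_n
    by (simp add: finite_subset)
  then have span_U: "V.span U = carrier_vec r"
    unfolding V.basis_def by simp
  have "y \<in> V.orthogonal_complement U"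
    using y orth B U_sub unfolding V.orthogonal_complement_def by (auto simp: cols_def)
  then have "y \<in> V.orthogonal_complement (V.span U)"
    using U_sub cols_B by auto
  then have "y \<bullet> y = 0"
    using y unfolding span_U V.orthogonal_complement_def by auto
  then show ?thesis
    using conjugate_square_eq_0_vec[OF y] by simp
qed

lemma full_row_rank_cancel_right:
  fixes B Y :: "real mat"
  assumes B: "B \<in> carrier_mat r c" and rank: "full_row_rank B"
    and Y: "Y \<in> carrier_mat k r" and YB: "Y * B = 0\<^sub>m k c"
  shows "Y = 0\<^sub>m k r"
proof (rule eq_matI)
  fix i j assume i: "i < dim_row (0\<^sub>m k r :: real mat)" and j: "j < dim_col (0\<^sub>m k r :: real mat)"
  have "row Y i \<bullet> col B l = 0" if "l < c" for l
    using arg_cong[OF YB, of "\<lambda>M. M $$ (i, l)"] i that Y B by simp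
  then have "row Y i = 0\<^sub>v r"
    using Y by (intro full_row_rank_orthogonal_cols_imp_zero[OF B rank]) auto
  then have "row Y i $ j = 0"
    using j by simp
  then show "Y $$ (i, j) = 0\<^sub>m k r $$ (i, j)"
    using i j Y by simp
qed (use Y in auto)

lemma minus_zero_mat [simp]:
  "(A :: 'a :: group_add mat) \<in> carrier_mat nr nc \<Longrightarrow> A - 0\<^sub>m nr nc = A"
  by (rule eq_matI) auto

lemma transpose_mult_complement:
  fixes X P T :: "'a :: comm_ring_1 mat"
  assumes X: "X \<in> carrier_mat n k" and P: "P \<in> carrier_mat n n" and T: "T \<in> carrier_mat n c"
  shows "X\<^sup>T * ((1\<^sub>m n - P) * T) = X\<^sup>T * T - (X\<^sup>T * P) * T"
proof -
  have "X\<^sup>T * ((1\<^sub>m n - P) * T) = (X\<^sup>T * (1\<^sub>m n - P)) * T"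
    using X P T by (intro assoc_mult_mat[symmetric]) auto
  also have "X\<^sup>T * (1\<^sub>m n - P) = X\<^sup>T - X\<^sup>T * P"
    using X P by (subst mult_minus_distrib_mat) auto
  also have "(X\<^sup>T - X\<^sup>T * P) * T = X\<^sup>T * T - (X\<^sup>T * P) * T"
    using X P T by (intro minus_mult_distrib_mat) auto
  finally show ?thesis .
qed

lemma transpose_mult_symmetric:
  fixes A X Y :: "'a :: comm_semiring_0 mat"
  assumes A: "A \<in> carrier_mat n n" "A\<^sup>T = A"
    and X: "X \<in> carrier_mat n k" and Y: "Y \<in> carrier_mat n l"
  shows "X\<^sup>T * (A * Y) = (Y\<^sup>T * (A * X))\<^sup>T"
proof -
  have "(Y\<^sup>T * (A * X))\<^sup>T = (A * X)\<^sup>T * Y"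
    using A X Y by (subst transpose_mult) auto
  also have "(A * X)\<^sup>T = X\<^sup>T * A"
    using A X by (subst transpose_mult) auto
  finally show ?thesis
    using A X Y by simp
qed

lemma transpose_mult_zero_swap:
  fixes X Y :: "'a :: comm_semiring_0 mat"
  assumes "X \<in> carrier_mat n k" "Y \<in> carrier_mat n l" "X\<^sup>T * Y = 0\<^sub>m k l"
  shows "Y\<^sup>T * X = 0\<^sub>m l k"
  using arg_cong[OF assms(3), of transpose_mat] assms(1,2)
  by (simp add: transpose_mult[of _ k n])

lemma orthonormal_list_cols:
  fixes X :: "real mat"
  assumes X: "X \<in> carrier_mat n k" and orth: "X\<^sup>T * X = 1\<^sub>m k"
  shows "orthonormal_list (cols X)"
  unfolding orthonormal_list_def
proof (intro allI impI)
  fix a b assume "a < length (cols X)" "b < length (cols X)"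
  then have "a < k" "b < k" using X by auto
  then show "cols X ! a \<bullet> cols X ! b = (if a = b then 1 else 0)"
    using arg_cong[OF orth, of "\<lambda>M. M $$ (a, b)"] X by auto
qed

lemma orthonormal_list_append:
  assumes "orthonormal_list xs" "orthonormal_list ys"
    and "\<And>x y. x \<in> set xs \<Longrightarrow> y \<in> set ys \<Longrightarrow> x \<bullet> y = 0 \<and> y \<bullet> x = 0"
  shows "orthonormal_list (xs @ ys)"
  unfolding orthonormal_list_def
proof (intro allI impI)
  fix a b assume a: "a < length (xs @ ys)" and b: "b < length (xs @ ys)"
  show "(xs @ ys) ! a \<bullet> (xs @ ys) ! b = (if a = b then 1 else 0)"
  proof (cases "a < length xs"; cases "b < length xs")
    assume "a < length xs" "b < length xs"
    then show ?thesis
      using assms(1) unfolding orthonormal_list_def by (simp add: nth_append)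
  next
    assume "a < length xs" "\<not> b < length xs"
    then show ?thesis
      using assms(3)[of "xs ! a" "ys ! (b - length xs)"] b by (auto simp: nth_append)
  next
    assume "\<not> a < length xs" "b < length xs"
    then show ?thesis
      using assms(3)[of "xs ! b" "ys ! (a - length xs)"] a by (auto simp: nth_append)
  next
    assume "\<not> a < length xs" "\<not> b < length xs"
    then show ?thesis
      using assms(2) a b unfolding orthonormal_list_def by (auto simp: nth_append)
  qed
qed

lemma scalar_prod_cols_eq_0:
  fixes X Y :: "'a :: comm_semiring_0 mat"
  assumes X: "X \<in> carrier_mat n k" and Y: "Y \<in> carrier_mat n l" and XY: "X\<^sup>T * Y = 0\<^sub>m k l"
    and x: "x \<in> set (cols X)" and y: "y \<in> set (cols Y)"
  shows "x \<bullet> y = 0"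
proof -
  obtain a b where "a < k" "x = col X a" "b < l" "y = col Y b"
    using x y X Y by (auto simp: in_set_conv_nth)
  then show ?thesis
    using arg_cong[OF XY, of "\<lambda>M. M $$ (a, b)"] X Y by auto
qed

lemma orthonormal_list_concat_cols:
  fixes B :: "'i \<Rightarrow> real mat"
  assumes "distinct is"
    and "\<And>i. i \<in> set is \<Longrightarrow> B i \<in> carrier_mat n (w i)"
    and "\<And>i. i \<in> set is \<Longrightarrow> (B i)\<^sup>T * B i = 1\<^sub>m (w i)"
    and "\<And>i i'. i \<in> set is \<Longrightarrow> i' \<in> set is \<Longrightarrow> i \<noteq> i' \<Longrightarrow>
      (B i)\<^sup>T * B i' = 0\<^sub>m (w i) (w i')"
  shows "orthonormal_list (concat (map (\<lambda>i. cols (B i)) is))"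
  using assms
proof (induction "is" rule: rev_induct)
  case Nil
  then show ?case by (simp add: orthonormal_list_def)
next
  case (snoc i "is")
  have "orthonormal_list (concat (map (\<lambda>i. cols (B i)) is))"
    using snoc by simp
  moreover have "orthonormal_list (cols (B i))"
    using snoc.prems by (intro orthonormal_list_cols) auto
  moreover have "x \<bullet> y = 0 \<and> y \<bullet> x = 0"
    if x: "x \<in> set (concat (map (\<lambda>i. cols (B i)) is))" and y: "y \<in> set (cols (B i))" for x y
  proof -
    obtain i' where i': "i' \<in> set is" "x \<in> set (cols (B i'))"
      using x by auto
    then have "i' \<noteq> i"
      using snoc.prems(1) by auto
    then show ?thesis
      using i' y snoc.prems(2-4)
      by (auto intro!: scalar_prod_cols_eq_0[of "B i'" n "w i'" "B i" "w i" x y]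
          scalar_prod_cols_eq_0[of "B i" n "w i" "B i'" "w i'" y x])
  qed
  ultimately have "orthonormal_list (concat (map (\<lambda>i. cols (B i)) is) @ cols (B i))"
    by (rule orthonormal_list_append)
  then show ?case
    by simp
qed

locale block_lanczos_continuation =
  fixes n m p :: nat
    and A W :: "real mat"
    and q qt beta P :: "nat \<Rightarrow> real mat"
    and r :: "nat \<Rightarrow> nat"
  assumes A_carrier: "A \<in> carrier_mat n n" and A_symmetric: "A\<^sup>T = A"
    and W_carrier: "W \<in> carrier_mat n m" and W_orthonormal: "W\<^sup>T * W = 1\<^sub>m m"
    and qt_1_carrier: "qt 1 \<in> carrier_mat n p"
    and qt_2_carrier: "qt 2 \<in> carrier_mat n (r 1)"
    and qt_rec: "\<And>j. j \<ge> 3 \<Longrightarrow> qt j = A * q (j - 1) - q (j - 2) * (beta (j - 1))\<^sup>T"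
    and P_1: "P 1 = W * W\<^sup>T"
    and P_2: "P 2 = P 1 + q 1 * (q 1)\<^sup>T"
    and P_rec: "\<And>j. j \<ge> 3 \<Longrightarrow> P j = P 2 + q (j - 1) * (q (j - 1))\<^sup>T"
    and q_carrier: "\<And>j. j \<ge> 1 \<Longrightarrow> q j \<in> carrier_mat n (r j)"
    and beta_1_carrier: "beta 1 \<in> carrier_mat (r 1) p"
    and beta_carrier: "\<And>j. j \<ge> 2 \<Longrightarrow> beta j \<in> carrier_mat (r j) (r (j - 1))"
    and q_orthonormal: "\<And>j. j \<ge> 1 \<Longrightarrow> (q j)\<^sup>T * q j = 1\<^sub>m (r j)"
    and q_beta: "\<And>j. j \<ge> 1 \<Longrightarrow> q j * beta j = (1\<^sub>m n - P j) * qt j"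
    and beta_full_row_rank: "\<And>j. j \<ge> 1 \<Longrightarrow> full_row_rank (beta j)"
begin

lemma beta_carrier_dim_col: "j \<ge> 1 \<Longrightarrow> beta j \<in> carrier_mat (r j) (dim_col (beta j))"
  using beta_1_carrier beta_carrier[of j] by (cases "j = 1") auto

lemma qt_carrier: "j \<ge> 1 \<Longrightarrow> qt j \<in> carrier_mat n (dim_col (beta j))"
proof -
  assume "j \<ge> 1"
  then consider "j = 1" | "j = 2" | "j \<ge> 3" by linarith
  then show ?thesis
  proof cases
    case 3
    then have "q (j - 1) \<in> carrier_mat n (r (j - 1))" "q (j - 2) \<in> carrier_mat n (r (j - 2))"
      "beta (j - 1) \<in> carrier_mat (r (j - 1)) (r (j - 2))" "dim_col (beta j) = r (j - 1)"
      using q_carrier[of "j - 1"] q_carrier[of "j - 2"] beta_carrier[of "j - 1"] beta_carrier[of j]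
      by (auto simp: numeral_eq_Suc)
    then show ?thesis
      using 3 A_carrier unfolding qt_rec[OF 3] by auto
  qed (use qt_1_carrier qt_2_carrier beta_1_carrier beta_carrier[of 2] in auto)
qed

definition block :: "nat \<Rightarrow> real mat" where
  "block i = (if i = 0 then W else q i)"

definition width :: "nat \<Rightarrow> nat" where
  "width i = (if i = 0 then m else r i)"

lemma block_0: "block 0 = W"
  and block_q: "i \<ge> 1 \<Longrightarrow> block i = q i" and width_q: "i \<ge> 1 \<Longrightarrow> width i = r i"
  by (auto simp: block_def width_def)

lemma block_carrier [simp]: "block i \<in> carrier_mat n (width i)"
  using W_carrier q_carrier by (simp add: block_def width_def)

lemma dim_row_block [simp]: "dim_row (block i) = n" and dim_col_block [simp]: "dim_col (block i) = width i"
  using carrier_matD[OF block_carrier] by auto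

lemma block_orthonormal: "(block i)\<^sup>T * block i = 1\<^sub>m (width i)"
  using W_orthonormal q_orthonormal by (simp add: block_def width_def)

definition orthogonal_upto :: "nat \<Rightarrow> bool" where
  "orthogonal_upto J \<longleftrightarrow>
    (\<forall>a b. a < b \<longrightarrow> b \<le> J \<longrightarrow> (block a)\<^sup>T * block b = 0\<^sub>m (width a) (width b))"

lemma orthogonal_uptoD:
  assumes "orthogonal_upto J" "a \<le> J" "b \<le> J" "a \<noteq> b"
  shows "(block a)\<^sup>T * block b = 0\<^sub>m (width a) (width b)"
proof (cases "a < b")
  case True
  then show ?thesis
    using assms unfolding orthogonal_upto_def by blast
next
  case False
  then have "b < a"
    using assms(4) by simp
  then have "(block b)\<^sup>T * block a = 0\<^sub>m (width b) (width a)"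
    using assms unfolding orthogonal_upto_def by blast
  then show ?thesis
    by (rule transpose_mult_zero_swap[OF block_carrier block_carrier])
qed

lemma q_orthogonal:
  assumes "orthogonal_upto J" "1 \<le> a" "a \<le> J" "1 \<le> b" "b \<le> J" "a \<noteq> b"
  shows "(q a)\<^sup>T * q b = 0\<^sub>m (r a) (r b)"
  using orthogonal_uptoD[of J a b] assms by (simp add: block_q width_q)

definition projector_blocks :: "nat \<Rightarrow> nat set" where
  "projector_blocks j = {0, 1, j - 1} \<inter> {..<j}"

lemma P_1_block: "P 1 = block 0 * (block 0)\<^sup>T"
  unfolding P_1 block_0 ..

lemma P_2_block: "P 2 = block 0 * (block 0)\<^sup>T + block 1 * (block 1)\<^sup>T"
  unfolding P_2 P_1_block block_q[OF order_refl] ..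

lemma P_block: "j \<ge> 3 \<Longrightarrow>
    P j = block 0 * (block 0)\<^sup>T + block 1 * (block 1)\<^sup>T + block (j - 1) * (block (j - 1))\<^sup>T"
  using P_rec P_2_block block_q[of "j - 1"] by simp

lemma P_carrier: "j \<ge> 1 \<Longrightarrow> P j \<in> carrier_mat n n"
  using P_1_block P_2_block P_block[of j] by (cases "j = 1 \<or> j = 2") auto

lemma block_transpose_mult_P:
  assumes orth: "orthogonal_upto J" and j: "1 \<le> j" "j \<le> Suc J" and a: "a \<le> J"
  shows "(block a)\<^sup>T * P j =
    (if a \<in> projector_blocks j then (block a)\<^sup>T else 0\<^sub>m (width a) n)"
proof -
  have outer: "(block a)\<^sup>T * (block i * (block i)\<^sup>T) =
      (if i = a then (block a)\<^sup>T else 0\<^sub>m (width a) n)" if "i < j" for i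
  proof -
    have "(block a)\<^sup>T * (block i * (block i)\<^sup>T) = ((block a)\<^sup>T * block i) * (block i)\<^sup>T"
      by (intro assoc_mult_mat[symmetric]) auto
    then show ?thesis
      using orthogonal_uptoD[OF orth a, of i] that j block_orthonormal[of a] by auto
  qed
  have outer_carrier: "block i * (block i)\<^sup>T \<in> carrier_mat n n" for i
    by auto
  have distrib: "(block a)\<^sup>T * (M + N) = (block a)\<^sup>T * M + (block a)\<^sup>T * N"
    if "M \<in> carrier_mat n n" "N \<in> carrier_mat n n" for M N
    using that by (intro mult_add_distrib_mat) auto
  consider "j = 1" | "j = 2" | "j \<ge> 3"
    using j by linarith
  then show ?thesis
  proof cases
    case 1
    then show ?thesis
      using outer[of 0] unfolding 1 P_1_block by (simp add: projector_blocks_def)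
  next
    case 2
    then show ?thesis
      using outer[of 0] outer[of 1]
      unfolding 2 P_2_block distrib[OF outer_carrier outer_carrier]
      by (auto simp: projector_blocks_def)
  next
    case 3
    show ?thesis
      using 3 outer[of 0] outer[of 1] outer[of "j - 1"]
      unfolding P_block[OF 3] distrib[OF add_carrier_mat[OF outer_carrier] outer_carrier]
        distrib[OF outer_carrier outer_carrier]
      by (auto simp: projector_blocks_def)
  qed
qed

lemma block_transpose_mult_q_beta:
  assumes orth: "orthogonal_upto J" and j: "1 \<le> j" "j \<le> Suc J" and a: "a \<le> J"
  shows "(block a)\<^sup>T * (q j * beta j) =
    (if a \<in> projector_blocks j then 0\<^sub>m (width a) (dim_col (beta j)) else (block a)\<^sup>T * qt j)"
proof -
  have "(block a)\<^sup>T * qt j \<in> carrier_mat (width a) (dim_col (beta j))"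
    using qt_carrier[OF j(1)] by auto
  then show ?thesis
    using block_transpose_mult_P[OF assms] q_beta[OF j(1)]
      transpose_mult_complement[OF block_carrier P_carrier[OF j(1)] qt_carrier[OF j(1)]]
      carrier_matD[OF qt_carrier[OF j(1)]]
    by simp
qed

lemma transpose_mult_qt_rec:
  assumes X: "X \<in> carrier_mat n k" and j: "j \<ge> 3"
  shows "X\<^sup>T * qt j = X\<^sup>T * (A * q (j - 1)) - (X\<^sup>T * q (j - 2)) * (beta (j - 1))\<^sup>T"
proof -
  have q: "q (j - 1) \<in> carrier_mat n (r (j - 1))" "q (j - 2) \<in> carrier_mat n (r (j - 2))"
    and beta: "beta (j - 1) \<in> carrier_mat (r (j - 1)) (r (j - 2))"
    using q_carrier[of "j - 1"] q_carrier[of "j - 2"] beta_carrier[of "j - 1"] j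
    by (auto simp: numeral_eq_Suc)
  have "X\<^sup>T * qt j = X\<^sup>T * (A * q (j - 1)) - X\<^sup>T * (q (j - 2) * (beta (j - 1))\<^sup>T)"
    unfolding qt_rec[OF j] using X A_carrier q beta by (intro mult_minus_distrib_mat) auto
  also have "X\<^sup>T * (q (j - 2) * (beta (j - 1))\<^sup>T) = (X\<^sup>T * q (j - 2)) * (beta (j - 1))\<^sup>T"
    using X q beta by (intro assoc_mult_mat[symmetric]) auto
  finally show ?thesis .
qed

lemma beta_eq_transpose_mult_A:
  assumes j: "j \<ge> 3" and orth: "orthogonal_upto j"
  shows "beta j = (q j)\<^sup>T * A * q (j - 1)"
proof -
  have q: "q j \<in> carrier_mat n (r j)" "q (j - 1) \<in> carrier_mat n (r (j - 1))"
    and beta': "beta (j - 1) \<in> carrier_mat (r (j - 1)) (r (j - 2))"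
    using q_carrier[of j] q_carrier[of "j - 1"] beta_carrier[of "j - 1"] j
    by (auto simp: numeral_eq_Suc)
  have beta: "beta j \<in> carrier_mat (r j) (dim_col (beta j))"
    using beta_carrier_dim_col j by simp
  have "j \<notin> projector_blocks j"
    using j by (auto simp: projector_blocks_def)
  then have q_qt: "(q j)\<^sup>T * (q j * beta j) = (q j)\<^sup>T * qt j"
    using block_transpose_mult_q_beta[OF orth, of j j] j by (simp add: block_q)
  have "beta j = ((q j)\<^sup>T * q j) * beta j"
    using q_orthonormal[of j] beta j by (simp del: assoc_mult_mat)
  also have "\<dots> = (q j)\<^sup>T * (q j * beta j)"
    using q beta by (intro assoc_mult_mat) auto
  also have "\<dots> = (q j)\<^sup>T * qt j"
    by (fact q_qt)
  also have "\<dots> = (q j)\<^sup>T * (A * q (j - 1)) - ((q j)\<^sup>T * q (j - 2)) * (beta (j - 1))\<^sup>T"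
    using transpose_mult_qt_rec[OF q(1) j] .
  also have "(q j)\<^sup>T * q (j - 2) = 0\<^sub>m (r j) (r (j - 2))"
    using q_orthogonal[OF orth, of j "j - 2"] j by simp
  also have "(q j)\<^sup>T * (A * q (j - 1)) - 0\<^sub>m (r j) (r (j - 2)) * (beta (j - 1))\<^sup>T =
      (q j)\<^sup>T * (A * q (j - 1))"
    using q beta' A_carrier by (subst left_mult_zero_mat) (auto intro: minus_zero_mat)
  also have "\<dots> = (q j)\<^sup>T * A * q (j - 1)"
    using q A_carrier by (intro assoc_mult_mat[symmetric]) auto
  finally show ?thesis .
qed

lemma q_transpose_mult_A_q:
  assumes orth: "orthogonal_upto K" and a: "a \<ge> 2" "a + 1 < K"
  shows "(q K)\<^sup>T * (A * q a) = 0\<^sub>m (r K) (r a)"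
proof -
  have q: "q K \<in> carrier_mat n (r K)" "q a \<in> carrier_mat n (r a)"
    "q (a + 1) \<in> carrier_mat n (r (a + 1))"
    and beta: "beta (a + 1) \<in> carrier_mat (r (a + 1)) (r a)"
    using q_carrier beta_carrier[of "a + 1"] a by auto
  have "K \<notin> projector_blocks (a + 1)"
    using a by (auto simp: projector_blocks_def)
  then have q_qt: "(q K)\<^sup>T * qt (a + 1) = (q K)\<^sup>T * (q (a + 1) * beta (a + 1))"
    using block_transpose_mult_q_beta[OF orth, of "a + 1" K] a by (simp add: block_q)
  have "(q K)\<^sup>T * q (a - 1) = 0\<^sub>m (r K) (r (a - 1))"
    using q_orthogonal[OF orth, of K "a - 1"] a by simp
  then have "(q K)\<^sup>T * (A * q a) = (q K)\<^sup>T * qt (a + 1)"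
    using transpose_mult_qt_rec[OF q(1), of "a + 1"] beta_carrier[of a] q A_carrier a
    by (simp del: assoc_mult_mat)
  also have "\<dots> = ((q K)\<^sup>T * q (a + 1)) * beta (a + 1)"
    unfolding q_qt using q beta by (intro assoc_mult_mat[symmetric]) auto
  also have "\<dots> = 0\<^sub>m (r K) (r a)"
    using q_orthogonal[OF orth, of K "a + 1"] a beta by simp
  finally show ?thesis .
qed

lemma q_transpose_mult_qt_Suc:
  assumes orth: "orthogonal_upto J" and a: "a \<ge> 2" "a + 1 \<le> J"
  shows "(q a)\<^sup>T * qt (Suc J) = 0\<^sub>m (r a) (r J)"
proof -
  have q: "q a \<in> carrier_mat n (r a)" "q J \<in> carrier_mat n (r J)"
    "q (J - 1) \<in> carrier_mat n (r (J - 1))"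
    and beta: "beta J \<in> carrier_mat (r J) (r (J - 1))"
    using q_carrier beta_carrier[of J] a by auto
  have "(q a)\<^sup>T * qt (Suc J) = (q a)\<^sup>T * (A * q J) - ((q a)\<^sup>T * q (J - 1)) * (beta J)\<^sup>T"
    using transpose_mult_qt_rec[OF q(1), of "Suc J"] a by simp
  also have "(q a)\<^sup>T * (A * q J) = ((q J)\<^sup>T * (A * q a))\<^sup>T"
    using transpose_mult_symmetric[OF A_carrier A_symmetric q(1,2)] .
  finally have qt_eq: "(q a)\<^sup>T * qt (Suc J) =
      ((q J)\<^sup>T * (A * q a))\<^sup>T - ((q a)\<^sup>T * q (J - 1)) * (beta J)\<^sup>T" .
  show ?thesis
  proof (cases "a = J - 1")
    case True
    have "(q J)\<^sup>T * (A * q a) = beta J"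
      using beta_eq_transpose_mult_A[OF _ orth] q A_carrier True a by simp
    moreover have "(q a)\<^sup>T * q (J - 1) = 1\<^sub>m (r a)"
      using q_orthonormal[of a] True a by simp
    ultimately show ?thesis
      unfolding qt_eq using beta True by simp
  next
    case False
    then have "(q J)\<^sup>T * (A * q a) = 0\<^sub>m (r J) (r a)"
      and "(q a)\<^sup>T * q (J - 1) = 0\<^sub>m (r a) (r (J - 1))"
      using q_transpose_mult_A_q[OF orth, of a] q_orthogonal[OF orth, of a "J - 1"] a by auto
    then show ?thesis
      unfolding qt_eq using beta by simp
  qed
qed

lemma orthogonal_upto_Suc:
  assumes orth: "orthogonal_upto J"
  shows "orthogonal_upto (Suc J)"
proof -
  have j: "1 \<le> Suc J"
    by simp
  have q: "q (Suc J) \<in> carrier_mat n (r (Suc J))"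
    using q_carrier by simp
  have q_Suc_orthogonal: "(block a)\<^sup>T * q (Suc J) = 0\<^sub>m (width a) (r (Suc J))" if a: "a \<le> J" for a
  proof (rule full_row_rank_cancel_right[OF beta_carrier_dim_col[OF j] beta_full_row_rank[OF j]])
    show "(block a)\<^sup>T * q (Suc J) \<in> carrier_mat (width a) (r (Suc J))"
      using q by (intro mult_carrier_mat[of _ _ n]) auto
    have "(block a)\<^sup>T * q (Suc J) * beta (Suc J) = (block a)\<^sup>T * (q (Suc J) * beta (Suc J))"
      using q beta_carrier_dim_col[OF j] by (intro assoc_mult_mat) auto
    also have "\<dots> = 0\<^sub>m (width a) (dim_col (beta (Suc J)))"
    proof (cases "a \<in> projector_blocks (Suc J)")
      case True
      then show ?thesis
        using block_transpose_mult_q_beta[OF orth j _ a] by simp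
    next
      case False
      then have a2: "a \<ge> 2" and aJ: "a + 1 \<le> J"
        using a by (auto simp: projector_blocks_def)
      have "(block a)\<^sup>T * (q (Suc J) * beta (Suc J)) = (q a)\<^sup>T * qt (Suc J)"
        using block_transpose_mult_q_beta[OF orth j _ a] False a2 by (simp add: block_q)
      also have "\<dots> = 0\<^sub>m (r a) (r J)"
        by (rule q_transpose_mult_qt_Suc[OF orth a2 aJ])
      finally show ?thesis
        using beta_carrier[of "Suc J"] a2 aJ by (simp add: width_q)
    qed
    finally show "(block a)\<^sup>T * q (Suc J) * beta (Suc J) =
        0\<^sub>m (width a) (dim_col (beta (Suc J)))" .
  qed
  show ?thesis
    unfolding orthogonal_upto_def
  proof (intro allI impI)
    fix a b :: nat
    assume ab: "a < b" "b \<le> Suc J"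
    show "(block a)\<^sup>T * block b = 0\<^sub>m (width a) (width b)"
    proof (cases "b = Suc J")
      case True
      then show ?thesis
        using q_Suc_orthogonal[of a] ab by (simp add: block_q width_q)
    next
      case False
      then show ?thesis
        using orth ab unfolding orthogonal_upto_def by simp
    qed
  qed
qed

lemma orthogonal_upto: "orthogonal_upto J"
proof (induction J)
  case 0
  then show ?case
    by (simp add: orthogonal_upto_def)
next
  case (Suc J)
  then show ?case
    by (rule orthogonal_upto_Suc)
qed

lemma orthonormal_list_W_q: "orthonormal_list (cols W @ concat (map (\<lambda>i. cols (q i)) [1..<j+1]))"
proof -
  have "map (\<lambda>i. cols (q i)) [1..<j+1] = map (\<lambda>i. cols (block i)) [1..<j+1]"
    by (intro map_cong) (auto simp: block_q)
  moreover have "[0..<j+1] = 0 # [1..<j+1]"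
    by (simp add: upt_conv_Cons del: upt_Suc)
  ultimately have "cols W @ concat (map (\<lambda>i. cols (q i)) [1..<j+1]) =
      concat (map (\<lambda>i. cols (block i)) [0..<j+1])"
    by (simp only: list.map concat.simps block_0)
  moreover have "orthonormal_list (concat (map (\<lambda>i. cols (block i)) [0..<j+1]))"
    using block_orthonormal orthogonal_uptoD[OF orthogonal_upto[of j]]
    by (intro orthonormal_list_concat_cols) auto
  ultimately show ?thesis
    by simp
qed

end

theorem theorem3:
  fixes n m p :: nat
    and A W vkm1 vk alphak betak :: "real mat"
    and q qt beta P :: "nat \<Rightarrow> real mat"
    and r :: "nat \<Rightarrow> nat"
  assumes A: "A \<in> carrier_mat n n" "A\<^sup>T = A"
    and W: "W \<in> carrier_mat n m" "W\<^sup>T * W = 1\<^sub>m m"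
    and v: "vkm1 \<in> carrier_mat n p" "vk \<in> carrier_mat n p"
    and ab: "alphak \<in> carrier_mat p p" "betak \<in> carrier_mat p p"
    and qt1: "qt 1 = A * vk - vk * alphak - vkm1 * betak\<^sup>T"
    and qt2: "qt 2 = A * q 1 - vk * (beta 1)\<^sup>T"
    and qtj: "\<And>j. j \<ge> 3 \<Longrightarrow> qt j = A * q (j - 1) - q (j - 2) * (beta (j - 1))\<^sup>T"
    and P1: "P 1 = W * W\<^sup>T"
    and P2: "P 2 = P 1 + q 1 * (q 1)\<^sup>T"
    and Pj: "\<And>j. j \<ge> 3 \<Longrightarrow> P j = P 2 + q (j - 1) * (q (j - 1))\<^sup>T"
    and qdim: "\<And>j. j \<ge> 1 \<Longrightarrow> q j \<in> carrier_mat n (r j)"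
    and beta1dim: "beta 1 \<in> carrier_mat (r 1) p"
    and betajdim: "\<And>j. j \<ge> 2 \<Longrightarrow> beta j \<in> carrier_mat (r j) (r (j - 1))"
    and qorth: "\<And>j. j \<ge> 1 \<Longrightarrow> (q j)\<^sup>T * q j = 1\<^sub>m (r j)"
    and qspan: "\<And>j. j \<ge> 1 \<Longrightarrow> col_space (q j) = col_space ((1\<^sub>m n - P j) * qt j)"
    and qbeta: "\<And>j. j \<ge> 1 \<Longrightarrow> q j * beta j = (1\<^sub>m n - P j) * qt j"
    and betarank: "\<And>j. j \<ge> 1 \<Longrightarrow> full_row_rank (beta j)"
  shows "(\<forall>j \<ge> 1. orthonormal_list (cols W @ concat (map (\<lambda>i. cols (q i)) [1..<j+1])))
       \<and> (\<forall>j \<ge> 3. beta j = (q j)\<^sup>T * A * q (j - 1))"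
proof -
  have "qt 1 \<in> carrier_mat n p" "qt 2 \<in> carrier_mat n (r 1)"
    unfolding qt1 qt2 using A v ab qdim[of 1] beta1dim by auto
  then interpret block_lanczos_continuation n m p A W q qt beta P r
    using A W qtj P1 P2 Pj qdim beta1dim betajdim qorth qbeta betarank
    by unfold_locales auto
  show ?thesis
    using orthonormal_list_W_q beta_eq_transpose_mult_A[OF _ orthogonal_upto] by blast
qed

end
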